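(* Let $q$ be a prime power and let $\mathcal W(5,q)$ be the symplectic polar space of ${\rm PG}(5,q)$ defined by the alternating form with Gram matrix $\begin{pmatrix} 0_3 & I_3\\ -I_3 & 0_3\end{pmatrix}$, with $\Pi_1=\langle U_4,U_5,U_6\rangle$ and $\Pi_2=\langle U_1,U_2,U_3\rangle$. Let $\mathcal P_0$ be the set of points $R$ of $\mathcal W(5,q)\setminus(\Pi_1\cup\Pi_2)$ such that the unique line through $R$ meeting both $\Pi_1$ and $\Pi_2$ is a line of $\mathcal W(5,q)$. If $\ell$ is a line of $\mathcal W(5,q)$ disjoint from $\Pi_1\cup\Pi_2$, then $|\ell\cap\mathcal P_0|\in\{1,q+1\}$ if $q$ is even, and $|\ell\cap\mathcal P_0|\in\{0,1,2\}$ if $q$ is odd.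
   Context: $U_i$ is the point with $1$ in position $i$ and $0$ elsewhere. All points of ${\rm PG}(5,q)$ are points of $\mathcal W(5,q)$; a line of $\mathcal W(5,q)$ is a totally isotropic line. *)

theory Defs
  imports Main
begin

text \<open>Vectors of the 6-dimensional space over a field: functions nat => 'a
  supported on coordinates 0..5 (coordinate i here is coordinate i+1 of the paper).\<close>

definition isvec :: "(nat \<Rightarrow> 'a::field) \<Rightarrow> bool" where
  "isvec v \<longleftrightarrow> (\<forall>i\<ge>6. v i = 0)"

definition lc :: "'a::field \<Rightarrow> (nat \<Rightarrow> 'a) \<Rightarrow> 'a \<Rightarrow> (nat \<Rightarrow> 'a) \<Rightarrow> (nat \<Rightarrow> 'a)" where
  "lc a u b w = (\<lambda>i. a * u i + b * w i)"

definition pt :: "(nat \<Rightarrow> 'a::field) \<Rightarrow> (nat \<Rightarrow> 'a) set" where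
  "pt v = {(\<lambda>i. c * v i) | c. c \<noteq> 0}"

definition PG5_points :: "(nat \<Rightarrow> 'a::field) set set" where
  "PG5_points = {pt v | v. isvec v \<and> v \<noteq> (\<lambda>_. 0)}"

definition indep :: "(nat \<Rightarrow> 'a::field) \<Rightarrow> (nat \<Rightarrow> 'a) \<Rightarrow> bool" where
  "indep u w \<longleftrightarrow> (\<forall>a b. lc a u b w = (\<lambda>_. 0) \<longrightarrow> a = 0 \<and> b = 0)"

definition pgline :: "(nat \<Rightarrow> 'a::field) \<Rightarrow> (nat \<Rightarrow> 'a) \<Rightarrow> (nat \<Rightarrow> 'a) set set" where
  "pgline u w = {pt (lc a u b w) | a b. (a, b) \<noteq> (0, 0)}"

definition PG5_line :: "(nat \<Rightarrow> 'a::field) set set \<Rightarrow> bool" where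
  "PG5_line l \<longleftrightarrow> (\<exists>u w. isvec u \<and> isvec w \<and> indep u w \<and> l = pgline u w)"

text \<open>Alternating form with Gram matrix [[0,I],[-I,0]].\<close>
definition sform :: "(nat \<Rightarrow> 'a::field) \<Rightarrow> (nat \<Rightarrow> 'a) \<Rightarrow> 'a" where
  "sform u v = (\<Sum>i<3. u i * v (i + 3) - u (i + 3) * v i)"

definition W_line :: "(nat \<Rightarrow> 'a::field) set set \<Rightarrow> bool" where
  "W_line l \<longleftrightarrow> (\<exists>u w. isvec u \<and> isvec w \<and> indep u w \<and> sform u w = 0 \<and> l = pgline u w)"

definition Pi1 :: "(nat \<Rightarrow> 'a::field) set set" where
  "Pi1 = {pt v | v. isvec v \<and> v \<noteq> (\<lambda>_. 0) \<and> (\<forall>i<3. v i = 0)}"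

definition Pi2 :: "(nat \<Rightarrow> 'a::field) set set" where
  "Pi2 = {pt v | v. isvec v \<and> v \<noteq> (\<lambda>_. 0) \<and> (\<forall>i\<ge>3. v i = 0)}"

definition P0 :: "(nat \<Rightarrow> 'a::field) set set" where
  "P0 = {R. R \<in> PG5_points \<and> R \<notin> Pi1 \<union> Pi2 \<and>
            W_line (THE l. PG5_line l \<and> R \<in> l \<and> l \<inter> Pi1 \<noteq> {} \<and> l \<inter> Pi2 \<noteq> {})}"

end

theory Submission
  imports Defs
begin

text \<open>
  Write \<open>\<ell> = \<langle>u, w\<rangle>\<close>. The transversal through a point \<open>\<langle>v\<rangle>\<close> off \<open>\<Pi>\<^sub>1 \<union> \<Pi>\<^sub>2\<close> is spanned
  by the two halves \<open>(v\<^sub>1, v\<^sub>2, v\<^sub>3, 0, 0, 0)\<close> and \<open>(0, 0, 0, v\<^sub>4, v\<^sub>5, v\<^sub>6)\<close> of \<open>v\<close>,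
  so it is totally isotropic iff \<open>Q(v) = v\<^sub>1 v\<^sub>4 + v\<^sub>2 v\<^sub>5 + v\<^sub>3 v\<^sub>6 = 0\<close>. As \<open>\<ell>\<close> is
  totally isotropic, \<open>Q(s u + t w) = A s\<^sup>2 + 2B s t + C t\<^sup>2\<close> is a binary quadratic form.
  For odd \<open>q\<close> it does not vanish identically: otherwise the halves of \<open>u\<close>, \<open>w\<close> would span
  two mutually orthogonal planes of \<open>GF(q)\<^sup>3\<close> (they are planes because \<open>\<ell>\<close> misses
  \<open>\<Pi>\<^sub>1 \<union> \<Pi>\<^sub>2\<close>), so it has at most two projective zeros. For even \<open>q\<close> squaring is
  bijective and \<open>Q = A s\<^sup>2 + C t\<^sup>2 = (\<surd>A s + \<surd>C t)\<^sup>2\<close>, which vanishes either on all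
  \<open>q + 1\<close> points of \<open>\<ell>\<close> or on exactly one.
\<close>

section \<open>Finite fields and binary quadratic forms\<close>

lemma even_card_involution:
  assumes "finite A" and invol: "\<And>x. x \<in> A \<Longrightarrow> f x \<in> A \<and> f x \<noteq> x \<and> f (f x) = x"
  shows "even (card A)"
proof -
  let ?C = "(\<lambda>x. {x, f x}) ` A"
  have orbit: "{z, f z} = {x, f x}" if "x \<in> A" "z \<in> {x, f x}" for x z
    using that invol[of x] by auto
  have "2 * card ?C = card (\<Union>?C)"
  proof (rule card_partition)
    show "finite ?C" "finite (\<Union>?C)" using assms(1) by auto
    show "card c = 2" if c: "c \<in> ?C" for c
    proof -
      obtain x where "x \<in> A" "c = {x, f x}" using c by blast
      then show ?thesis using invol[of x] by auto
    qed
    show "c1 \<inter> c2 = {}" if "c1 \<in> ?C" "c2 \<in> ?C" "c1 \<noteq> c2" for c1 c2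
      using that orbit by blast
  qed
  moreover have "\<Union>?C = A" using invol by auto
  ultimately show ?thesis by (metis dvd_triv_left)
qed

lemma even_card_UNIV_iff_char2:
  "even (card (UNIV :: 'a::{field,finite} set)) \<longleftrightarrow> (1::'a) + 1 = 0"
proof
  assume even: "even (card (UNIV :: 'a set))"
  show "(1::'a) + 1 = 0"
  proof (rule ccontr)
    assume two: "(1::'a) + 1 \<noteq> 0"
    have "even (card (UNIV - {0::'a}))"
    proof (rule even_card_involution[where f = uminus])
      fix x :: 'a
      assume "x \<in> UNIV - {0}"
      moreover have "(1 + 1) * x \<noteq> 0" if "x \<noteq> 0" using two that by simp
      ultimately show "- x \<in> UNIV - {0} \<and> - x \<noteq> x \<and> - (- x) = x"
        by (auto simp: distrib_right eq_neg_iff_add_eq_0)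
    qed simp
    moreover have "card (UNIV - {0::'a}) = card (UNIV :: 'a set) - 1"
      by (simp add: card_Diff_singleton)
    moreover have "card (UNIV :: 'a set) > 0" by (rule finite_UNIV_card_ge_0) simp
    ultimately show False using even by simp
  qed
next
  assume "(1::'a) + 1 = 0"
  then show "even (card (UNIV :: 'a set))"
    by (intro even_card_involution[where f = "\<lambda>x. x + 1"]) (simp_all add: add.assoc)
qed

lemma char2_square_surj:
  fixes c :: "'a::{field,finite}"
  assumes two: "(1::'a) + 1 = 0"
  obtains r where "r\<^sup>2 = c"
proof -
  have "inj (\<lambda>x::'a. x\<^sup>2)"
  proof (rule injI)
    fix x y :: 'a
    assume "x\<^sup>2 = y\<^sup>2"
    then have "(x - y)\<^sup>2 = 2 * (y\<^sup>2 - x * y)" by algebra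
    then show "x = y" using two by simp
  qed
  then have "surj (\<lambda>x::'a. x\<^sup>2)" by (simp add: finite_UNIV_inj_surj)
  then show ?thesis using that by (metis surjD)
qed

lemma binary_form_zero_if_three_zeros:
  fixes A D C s1 t1 s2 t2 s3 t3 :: "'a::field"
  assumes "A * s1\<^sup>2 + D * s1 * t1 + C * t1\<^sup>2 = 0"
    and "A * s2\<^sup>2 + D * s2 * t2 + C * t2\<^sup>2 = 0"
    and "A * s3\<^sup>2 + D * s3 * t3 + C * t3\<^sup>2 = 0"
    and "s1 * t2 \<noteq> s2 * t1" "s1 * t3 \<noteq> s3 * t1" "s2 * t3 \<noteq> s3 * t2"
  shows "A = 0 \<and> D = 0 \<and> C = 0"
proof -
  \<comment> \<open>the determinant of the linear system in \<open>(A, D, C)\<close> given by the three zeros\<close>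
  define det where "det = (s1 * t2 - s2 * t1) * (s1 * t3 - s3 * t1) * (s2 * t3 - s3 * t2)"
  have "det \<noteq> 0" using assms(4-6) unfolding det_def by auto
  moreover have "A * det = 0" "D * det = 0" "C * det = 0"
    unfolding det_def using assms(1-3) by algebra+
  ultimately show ?thesis by auto
qed

lemma char2_binary_form_has_zero:
  fixes A C :: "'a::{field,finite}"
  assumes "(1::'a) + 1 = 0"
  obtains s t where "(s, t) \<noteq> (0, 0)" "A * s\<^sup>2 + C * t\<^sup>2 = 0"
proof (cases "A = 0")
  case True
  then show ?thesis using that[of 1 0] by simp
next
  case False
  obtain r where "r\<^sup>2 = - C / A" using char2_square_surj[OF assms] .
  then show ?thesis using that[of r 1] False by simp
qed

lemma char2_binary_form_zeros_proportional:
  fixes A C s t s' t' :: "'a::field"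
  assumes two: "(1::'a) + 1 = 0" and "A \<noteq> 0 \<or> C \<noteq> 0"
    and zero: "A * s\<^sup>2 + C * t\<^sup>2 = 0" "A * s'\<^sup>2 + C * t'\<^sup>2 = 0"
  shows "s * t' = s' * t"
proof -
  have "A * (s * t' - s' * t)\<^sup>2 = 2 * (- C * t\<^sup>2 * t'\<^sup>2 - A * s * t' * s' * t)"
    "C * (s * t' - s' * t)\<^sup>2 = 2 * (- A * s\<^sup>2 * s'\<^sup>2 - C * s * t' * s' * t)"
    using zero by algebra+
  moreover have "(2::'a) = 0" using two by simp
  ultimately have "(s * t' - s' * t)\<^sup>2 = 0" using assms(2) by auto
  then show ?thesis by simp
qed

section \<open>Vectors of a 3-space\<close>

lemma sum_lessThan_3: "(\<Sum>i<(3::nat). f i) = f 0 + f 1 + (f 2 :: 'a::comm_monoid_add)"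
  by (simp add: eval_nat_numeral add.assoc)

lemma less_3_cases: "(i::nat) < 3 \<Longrightarrow> i = 0 \<or> i = 1 \<or> i = 2"
  by auto

definition dot3 :: "(nat \<Rightarrow> 'a::comm_ring_1) \<Rightarrow> (nat \<Rightarrow> 'a) \<Rightarrow> 'a" where
  "dot3 a b = (\<Sum>i<3. a i * b i)"

definition cross3 :: "(nat \<Rightarrow> 'a::comm_ring_1) \<Rightarrow> (nat \<Rightarrow> 'a) \<Rightarrow> nat \<Rightarrow> 'a" where
  "cross3 a c k =
    (if k = 0 then a 1 * c 2 - a 2 * c 1
     else if k = 1 then a 2 * c 0 - a 0 * c 2
     else a 0 * c 1 - a 1 * c 0)"

definition indep3 :: "(nat \<Rightarrow> 'a::comm_ring_1) \<Rightarrow> (nat \<Rightarrow> 'a) \<Rightarrow> bool" where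
  "indep3 a c \<longleftrightarrow> (\<forall>s t. (\<forall>i<3. s * a i + t * c i = 0) \<longrightarrow> s = 0 \<and> t = 0)"

lemma indep3D: "indep3 a c \<Longrightarrow> \<forall>i<3. s * a i + t * c i = 0 \<Longrightarrow> s = 0 \<and> t = 0"
  unfolding indep3_def by blast

lemma parallel_not_indep3:
  fixes b d n :: "nat \<Rightarrow> 'a::idom"
  assumes "j < 3" "n j \<noteq> 0"
    and b: "\<forall>k<3. b k * n j = b j * n k" and d: "\<forall>k<3. d k * n j = d j * n k"
  shows "\<not> indep3 b d"
proof
  assume indep: "indep3 b d"
  have "\<forall>k<3. d j * b k + (- b j) * d k = 0"
  proof (intro allI impI)
    fix k :: nat
    assume "k < 3"
    then have "b k * n j = b j * n k" "d k * n j = d j * n k" using b d by blast+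
    then have "(d j * b k + (- b j) * d k) * n j = 0" by algebra
    then show "d j * b k + (- b j) * d k = 0" using assms(2) by simp
  qed
  then have "b j = 0" using indep3D[OF indep, of "d j" "- b j"] by simp
  have "b k = 0" if "k < 3" for k
  proof -
    have "b k * n j = b j * n k" using b that by blast
    then show ?thesis using \<open>b j = 0\<close> assms(2) by simp
  qed
  then have "\<forall>k<3. 1 * b k + 0 * d k = 0" by simp
  then show False using indep3D[OF indep, of 1 0] by simp
qed

lemma cross3_nonzero:
  fixes a c :: "nat \<Rightarrow> 'a::idom"
  assumes "indep3 a c"
  shows "\<exists>j<3. cross3 a c j \<noteq> 0"
proof (rule ccontr)
  assume "\<not> ?thesis"
  then have "cross3 a c 0 = 0" "cross3 a c 1 = 0" "cross3 a c 2 = 0" by auto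
  then have "c 0 * a 1 = c 1 * a 0" "c 0 * a 2 = c 2 * a 0" "c 1 * a 2 = c 2 * a 1"
    by (simp_all add: cross3_def algebra_simps)
  then have minors: "c k * a j = c j * a k" if "j < 3" "k < 3" for j k
    using less_3_cases[OF that(1)] less_3_cases[OF that(2)] by auto
  obtain j where j: "j < 3" "a j \<noteq> 0" using indep3D[OF assms, of 1 0] by auto
  have "\<forall>k<3. a k * a j = a j * a k" "\<forall>k<3. c k * a j = c j * a k"
    using minors[OF j(1)] by (simp_all add: mult.commute)
  then show False using parallel_not_indep3[of j a a c] j assms by blast
qed

lemma orthogonal_imp_parallel_cross3:
  fixes a b c :: "nat \<Rightarrow> 'a::comm_ring_1"
  assumes "dot3 a b = 0" "dot3 c b = 0" "j < 3" "k < 3"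
  shows "b j * cross3 a c k = b k * cross3 a c j"
proof -
  \<comment> \<open>the components of \<open>b \<times> (a \<times> c) = (b \<bullet> c) a - (a \<bullet> b) c\<close>\<close>
  have "b 0 * cross3 a c 1 - b 1 * cross3 a c 0 = a 2 * dot3 c b - c 2 * dot3 a b"
    "b 0 * cross3 a c 2 - b 2 * cross3 a c 0 = c 1 * dot3 a b - a 1 * dot3 c b"
    "b 1 * cross3 a c 2 - b 2 * cross3 a c 1 = a 0 * dot3 c b - c 0 * dot3 a b"
    by (simp_all add: cross3_def dot3_def sum_lessThan_3 algebra_simps)
  then have "b 0 * cross3 a c 1 = b 1 * cross3 a c 0" "b 0 * cross3 a c 2 = b 2 * cross3 a c 0"
    "b 1 * cross3 a c 2 = b 2 * cross3 a c 1"
    using assms(1,2) by simp_all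
  then show ?thesis
    using less_3_cases[OF assms(3)] less_3_cases[OF assms(4)] by auto
qed

lemma indep3_pairs_not_orthogonal:
  fixes a b c d :: "nat \<Rightarrow> 'a::idom"
  assumes "indep3 a c" "indep3 b d"
    and "dot3 a b = 0" "dot3 a d = 0" "dot3 c b = 0" "dot3 c d = 0"
  shows False
proof -
  \<comment> \<open>\<open>b\<close> and \<open>d\<close> both lie on the line orthogonal to \<open>\<langle>a, c\<rangle>\<close>, spanned by \<open>a \<times> c\<close>\<close>
  obtain j where j: "j < 3" "cross3 a c j \<noteq> 0" using cross3_nonzero[OF assms(1)] by blast
  have "\<forall>k<3. b k * cross3 a c j = b j * cross3 a c k"
    "\<forall>k<3. d k * cross3 a c j = d j * cross3 a c k"
    using orthogonal_imp_parallel_cross3 assms(3-6) j(1) by metis+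
  then show False using parallel_not_indep3[of j "cross3 a c" b d] j assms(2) by blast
qed

section \<open>Points and lines of PG(5,q)\<close>

lemma lc_1_0 [simp]: "lc 1 u 0 w = u" and lc_0_1 [simp]: "lc 0 u 1 w = w"
  by (simp_all add: lc_def)

lemma isvec_lc: "isvec u \<Longrightarrow> isvec w \<Longrightarrow> isvec (lc s u t w)"
  by (simp add: isvec_def lc_def)

lemma lc_nonzero: "indep u w \<Longrightarrow> (s, t) \<noteq> (0, 0) \<Longrightarrow> lc s u t w \<noteq> (\<lambda>_. 0)"
  unfolding indep_def by blast

lemma indep_if_disjoint_supports:
  assumes "\<forall>i. p i = 0 \<or> q i = 0" "p \<noteq> (\<lambda>_. 0)" "q \<noteq> (\<lambda>_. 0)"
  shows "indep p q"
  unfolding indep_def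
proof (intro allI impI)
  fix a b :: 'a
  assume "lc a p b q = (\<lambda>_. 0)"
  then have pq: "a * p i + b * q i = 0" for i unfolding lc_def by meson
  obtain i j where "p i \<noteq> 0" "q j \<noteq> 0" using assms(2,3) by (auto simp: fun_eq_iff)
  then show "a = 0 \<and> b = 0" using pq[of i] pq[of j] assms(1) by (metis mult_eq_0_iff add_0 add_0_right)
qed

lemma pt_self: "v \<in> pt v"
  unfolding pt_def by (rule CollectI, rule exI[of _ 1]) simp

lemma pt_smult:
  assumes "(k::'a::field) \<noteq> 0"
  shows "pt (\<lambda>i. k * v i) = pt v"
  unfolding pt_def
proof (intro set_eqI iffI)
  fix x
  assume "x \<in> {\<lambda>i. c * (k * v i) |c. c \<noteq> 0}"
  then obtain c where "c \<noteq> 0" "x = (\<lambda>i. c * (k * v i))" by auto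
  then show "x \<in> {\<lambda>i. c * v i |c. c \<noteq> 0}" using assms
    by (intro CollectI exI[of _ "c * k"]) (auto simp: mult.assoc)
next
  fix x
  assume "x \<in> {\<lambda>i. c * v i |c. c \<noteq> 0}"
  then obtain c where "c \<noteq> 0" "x = (\<lambda>i. c * v i)" by auto
  then show "x \<in> {\<lambda>i. c * (k * v i) |c. c \<noteq> 0}" using assms
    by (intro CollectI exI[of _ "c / k"]) auto
qed

lemma pt_eqD: "pt v = pt w \<Longrightarrow> \<exists>c. (c::'a::field) \<noteq> 0 \<and> v = (\<lambda>i. c * w i)"
  using pt_self[of v] unfolding pt_def by auto

lemma pt_lc_in_pgline: "(a, b) \<noteq> (0, 0) \<Longrightarrow> pt (lc a u b w) \<in> pgline u w"
  unfolding pgline_def by blast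

lemma pgline_memD:
  assumes "pt p \<in> pgline u w"
  shows "\<exists>a b. (a, b) \<noteq> (0::'a::field, 0) \<and> p = lc a u b w"
proof -
  obtain a b where ab: "(a, b) \<noteq> (0, 0)" "pt p = pt (lc a u b w)"
    using assms unfolding pgline_def by auto
  obtain c where c: "c \<noteq> 0" "p = (\<lambda>i. c * lc a u b w i)" using pt_eqD[OF ab(2)] by auto
  show ?thesis
    by (rule exI[of _ "c * a"], rule exI[of _ "c * b"]) (use ab c in \<open>auto simp: lc_def algebra_simps\<close>)
qed

lemma proportional_pair:
  fixes s t s' t' :: "'a::field"
  assumes "(s', t') \<noteq> (0, 0)" "s * t' = s' * t"
  obtains k where "s = k * s'" "t = k * t'"
proof (cases "s' = 0")
  case True
  then show ?thesis using assms that[of "t / t'"] by auto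
next
  case False
  then show ?thesis using assms that[of "s / s'"] by (auto simp: field_simps)
qed

lemma pt_lc_eq_iff:
  assumes "indep u w" "(s, t) \<noteq> (0, 0)" "(s', t') \<noteq> (0, 0)"
  shows "pt (lc s u t w) = pt (lc s' u t' w) \<longleftrightarrow> s * t' = s' * t"
proof
  assume "pt (lc s u t w) = pt (lc s' u t' w)"
  then obtain c where c: "lc s u t w = (\<lambda>i. c * lc s' u t' w i)" using pt_eqD by blast
  have "lc (s - c * s') u (t - c * t') w = (\<lambda>_. 0)"
  proof
    fix i
    show "lc (s - c * s') u (t - c * t') w i = 0"
      using fun_cong[OF c, of i] unfolding lc_def by (simp add: algebra_simps)
  qed
  then have "s - c * s' = 0 \<and> t - c * t' = 0" using assms(1) unfolding indep_def by blast
  then show "s * t' = s' * t" by simp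
next
  assume "s * t' = s' * t"
  then obtain k where k: "s = k * s'" "t = k * t'" using proportional_pair assms(3) by blast
  then have "k \<noteq> 0" using assms(2) by auto
  have "lc s u t w = (\<lambda>i. k * lc s' u t' w i)" using k by (auto simp: lc_def algebra_simps)
  then show "pt (lc s u t w) = pt (lc s' u t' w)" using pt_smult[OF \<open>k \<noteq> 0\<close>] by simp
qed

lemma lc_lc: "lc g (lc a u b w) h (lc c u d w) = lc (g * a + h * c) u (g * b + h * d) w"
  by (auto simp: lc_def fun_eq_iff algebra_simps)

lemma pgline_lc_subset:
  assumes "a * d - b * c \<noteq> (0::'a::field)"
  shows "pgline (lc a u b w) (lc c u d w) \<subseteq> pgline u w"
proof
  fix X
  assume "X \<in> pgline (lc a u b w) (lc c u d w)"
  then obtain g h where gh: "(g, h) \<noteq> (0, 0)" "X = pt (lc g (lc a u b w) h (lc c u d w))"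
    unfolding pgline_def by auto
  have "(g * a + h * c, g * b + h * d) \<noteq> (0, 0)"
  proof
    assume "(g * a + h * c, g * b + h * d) = (0, 0)"
    then have "g * a + h * c = 0" "g * b + h * d = 0" by simp_all
    then have "g * (a * d - b * c) = 0" "h * (a * d - b * c) = 0" by algebra+
    then show False using gh(1) assms by simp
  qed
  then show "X \<in> pgline u w" using gh(2) pt_lc_in_pgline lc_lc by metis
qed

lemma pgline_lc_eq:
  assumes "a * d - b * c \<noteq> (0::'a::field)"
  shows "pgline (lc a u b w) (lc c u d w) = pgline u w"
proof
  show "pgline (lc a u b w) (lc c u d w) \<subseteq> pgline u w" using pgline_lc_subset[OF assms] .
  define \<delta> where "\<delta> = a * d - b * c"
  let ?p = "lc a u b w" and ?q = "lc c u d w"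
  have \<delta>: "\<delta> \<noteq> 0" using assms \<delta>_def by simp
  \<comment> \<open>\<open>u\<close> and \<open>w\<close> are recovered by the inverse matrix \<open>(d, -b; -c, a) / \<delta>\<close>\<close>
  have "d / \<delta> * a + - b / \<delta> * c = 1" "d / \<delta> * b + - b / \<delta> * d = 0"
    "- c / \<delta> * a + a / \<delta> * c = 0" "- c / \<delta> * b + a / \<delta> * d = 1"
    "(d / \<delta>) * (a / \<delta>) - (- b / \<delta>) * (- c / \<delta>) = 1 / \<delta>"
    using \<delta>_def \<delta> by (simp_all add: field_simps, algebra)
  then have "lc (d / \<delta>) ?p (- b / \<delta>) ?q = u" "lc (- c / \<delta>) ?p (a / \<delta>) ?q = w"
    and "(d / \<delta>) * (a / \<delta>) - (- b / \<delta>) * (- c / \<delta>) \<noteq> 0"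
    using \<delta> by (simp_all only: lc_lc lc_1_0 lc_0_1) simp
  then show "pgline u w \<subseteq> pgline ?p ?q" using pgline_lc_subset by metis
qed

lemma pgline_eq_pgline:
  assumes indep: "indep p q" and "pt p \<in> pgline u w" "pt q \<in> pgline u w"
  shows "pgline p q = pgline u w"
proof -
  obtain a b where p: "p = lc a u b w" using pgline_memD assms(2) by blast
  obtain c d where q: "q = lc c u d w" using pgline_memD assms(3) by blast
  have "a * d - b * c \<noteq> 0"
  proof
    assume det: "a * d - b * c = 0"
    have "d * a + - b * c = 0" "d * b + - b * d = 0" "c * a + - a * c = 0" "c * b + - a * d = 0"
      using det by (simp_all add: algebra_simps)
    then have "lc d p (- b) q = (\<lambda>_. 0)" "lc c p (- a) q = (\<lambda>_. 0)"
      unfolding p q lc_lc by (simp_all add: lc_def)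
    then have "d = 0 \<and> - b = 0" "c = 0 \<and> - a = 0" using indep unfolding indep_def by blast+
    then have "lc 1 p 0 q = (\<lambda>_. 0)" by (simp add: p lc_def)
    then show False using indep one_neq_zero unfolding indep_def by blast
  qed
  then show ?thesis using pgline_lc_eq p q by simp
qed

lemma pgline_eq_insert_range:
  assumes "indep u w"
  shows "pgline u w = insert (pt (lc 0 u 1 w)) (range (\<lambda>t. pt (lc 1 u t w)))"
proof
  show "pgline u w \<subseteq> insert (pt (lc 0 u 1 w)) (range (\<lambda>t. pt (lc 1 u t w)))"
  proof
    fix X
    assume "X \<in> pgline u w"
    then obtain s t where st: "(s, t) \<noteq> (0, 0)" "X = pt (lc s u t w)" unfolding pgline_def by auto
    show "X \<in> insert (pt (lc 0 u 1 w)) (range (\<lambda>t. pt (lc 1 u t w)))"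
    proof (cases "s = 0")
      case True
      then show ?thesis using st pt_lc_eq_iff[OF assms st(1), of 0 1] by simp
    next
      case False
      then show ?thesis using st pt_lc_eq_iff[OF assms st(1), of 1 "t / s"] by simp
    qed
  qed
  have "pt (lc 0 u 1 w) \<in> pgline u w" "pt (lc 1 u t w) \<in> pgline u w" for t
    by (rule pt_lc_in_pgline, simp)+
  then show "insert (pt (lc 0 u 1 w)) (range (\<lambda>t. pt (lc 1 u t w))) \<subseteq> pgline u w"
    by blast
qed

lemma card_pgline:
  fixes u w :: "nat \<Rightarrow> 'a::{field,finite}"
  assumes "indep u w"
  shows "card (pgline u w) = card (UNIV :: 'a set) + 1"
proof -
  have "inj (\<lambda>t. pt (lc 1 u t w))"
    by (rule injI) (use pt_lc_eq_iff[OF assms] in simp)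
  moreover have "pt (lc 0 u 1 w) \<notin> range (\<lambda>t. pt (lc 1 u t w))"
  proof
    assume "pt (lc 0 u 1 w) \<in> range (\<lambda>t. pt (lc 1 u t w))"
    then obtain t where "pt (lc 0 u 1 w) = pt (lc 1 u t w)" by blast
    then show False using pt_lc_eq_iff[OF assms, of 0 1 1 t] by simp
  qed
  ultimately show ?thesis unfolding pgline_eq_insert_range[OF assms] by (simp add: card_image)
qed

lemma sform_lc: "sform (lc a u b w) (lc c u d w) = (a * d - b * c) * sform u (w::nat \<Rightarrow> 'a::field)"
  unfolding sform_def lc_def sum_lessThan_3 by algebra

lemma W_line_pgline_iff:
  assumes "isvec u" "isvec w" "indep u w"
  shows "W_line (pgline u w) \<longleftrightarrow> sform u w = 0"
proof
  assume "W_line (pgline u w)"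
  then obtain u' w' where W: "sform u' w' = 0" "pgline u w = pgline u' w'"
    unfolding W_line_def by auto
  obtain a b c d where "u = lc a u' b w'" "w = lc c u' d w'"
    using pgline_memD pt_lc_in_pgline[of 1 0 u w] pt_lc_in_pgline[of 0 1 u w] W(2) by fastforce
  then show "sform u w = 0" using sform_lc[of a u' b w' c d] W(1) by simp
next
  assume "sform u w = 0"
  then show "W_line (pgline u w)" unfolding W_line_def using assms by blast
qed

section \<open>The transversal through a point\<close>

definition proj_Pi2 :: "(nat \<Rightarrow> 'a::zero) \<Rightarrow> nat \<Rightarrow> 'a" where
  "proj_Pi2 v = (\<lambda>i. if i < 3 then v i else 0)"

definition proj_Pi1 :: "(nat \<Rightarrow> 'a::zero) \<Rightarrow> nat \<Rightarrow> 'a" where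
  "proj_Pi1 v = (\<lambda>i. if i < 3 then 0 else v i)"

lemma isvec_proj: "isvec v \<Longrightarrow> isvec (proj_Pi2 v)" "isvec v \<Longrightarrow> isvec (proj_Pi1 v)"
  unfolding isvec_def proj_Pi2_def proj_Pi1_def by auto

lemma indep_proj:
  "proj_Pi2 v \<noteq> (\<lambda>_. 0) \<Longrightarrow> proj_Pi1 v \<noteq> (\<lambda>_. 0) \<Longrightarrow> indep (proj_Pi2 v) (proj_Pi1 v)"
  by (rule indep_if_disjoint_supports) (auto simp: proj_Pi2_def proj_Pi1_def)

lemma transversal_eq:
  fixes v :: "nat \<Rightarrow> 'a::field"
  assumes v: "isvec v" and x: "proj_Pi2 v \<noteq> (\<lambda>_. 0)" and y: "proj_Pi1 v \<noteq> (\<lambda>_. 0)"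
  shows "(THE l. PG5_line l \<and> pt v \<in> l \<and> l \<inter> Pi1 \<noteq> {} \<and> l \<inter> Pi2 \<noteq> {})
    = pgline (proj_Pi2 v) (proj_Pi1 v)" (is "(THE l. ?transversal l) = ?M")
proof (rule the_equality)
  note isvec = isvec_proj[OF v] and indep = indep_proj[OF x y]
  have "lc 1 (proj_Pi2 v) 1 (proj_Pi1 v) = v" by (auto simp: lc_def proj_Pi2_def proj_Pi1_def)
  then have "pt v \<in> ?M" using pt_lc_in_pgline[of 1 1 "proj_Pi2 v" "proj_Pi1 v"] by simp
  moreover have "pt (proj_Pi1 v) \<in> ?M \<inter> Pi1" "pt (proj_Pi2 v) \<in> ?M \<inter> Pi2"
    using pt_lc_in_pgline[of 0 1] pt_lc_in_pgline[of 1 0] isvec x y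
    by (auto simp: Pi1_def Pi2_def proj_Pi1_def proj_Pi2_def)
  ultimately show "?transversal ?M" using isvec indep unfolding PG5_line_def by blast
next
  fix L
  assume L: "?transversal L"
  then obtain p1 p2 where p1: "pt p1 \<in> L" "p1 \<noteq> (\<lambda>_. 0)" "\<forall>i<3. p1 i = 0"
    and p2: "pt p2 \<in> L" "p2 \<noteq> (\<lambda>_. 0)" "\<forall>i\<ge>3. p2 i = 0"
    unfolding Pi1_def Pi2_def by blast
  have "\<forall>i. p1 i = 0 \<or> p2 i = 0" using p1(3) p2(3) not_less by blast
  then have indep: "indep p1 p2" using p1(2) p2(2) by (rule indep_if_disjoint_supports)
  have "L = pgline p1 p2"
    using L p1(1) p2(1) pgline_eq_pgline[OF indep] unfolding PG5_line_def by auto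
  then obtain \<alpha> \<beta> where v_eq: "v = lc \<alpha> p1 \<beta> p2" using pgline_memD L by blast
  have "proj_Pi2 v = lc 0 p1 \<beta> p2" "proj_Pi1 v = lc \<alpha> p1 0 p2"
    using p1(3) p2(3) by (auto simp: v_eq proj_Pi2_def proj_Pi1_def lc_def)
  moreover have "\<alpha> \<noteq> 0" "\<beta> \<noteq> 0" using x y calculation by (auto simp: lc_def)
  ultimately show "L = ?M" using pgline_lc_eq[of 0 0 \<beta> \<alpha>] \<open>L = pgline p1 p2\<close> by simp
qed

definition upper3 :: "(nat \<Rightarrow> 'a) \<Rightarrow> nat \<Rightarrow> 'a" where
  "upper3 v i = v (i + 3)"

definition qform :: "(nat \<Rightarrow> 'a::comm_ring_1) \<Rightarrow> 'a" where
  "qform v = dot3 v (upper3 v)"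

lemma sform_proj: "sform (proj_Pi2 v) (proj_Pi1 v) = qform v"
  by (simp add: sform_def proj_Pi2_def proj_Pi1_def qform_def dot3_def upper3_def)

lemma sform_eq_dot3: "sform u w = dot3 u (upper3 w) - dot3 w (upper3 u)"
  by (simp add: sform_def dot3_def upper3_def sum_subtractf mult.commute)

lemma pt_in_P0_iff:
  fixes v :: "nat \<Rightarrow> 'a::field"
  assumes "isvec v" "v \<noteq> (\<lambda>_. 0)" "pt v \<notin> Pi1 \<union> Pi2"
  shows "pt v \<in> P0 \<longleftrightarrow> qform v = 0"
proof -
  have x: "proj_Pi2 v \<noteq> (\<lambda>_. 0)"
  proof
    assume "proj_Pi2 v = (\<lambda>_. 0)"
    then have "\<forall>i<3. v i = 0" unfolding proj_Pi2_def by (metis (full_types))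
    then show False using assms unfolding Pi1_def by blast
  qed
  have y: "proj_Pi1 v \<noteq> (\<lambda>_. 0)"
  proof
    assume "proj_Pi1 v = (\<lambda>_. 0)"
    then have "\<forall>i\<ge>3. v i = 0" unfolding proj_Pi1_def by (metis (full_types) not_le)
    then show False using assms unfolding Pi2_def by blast
  qed
  have "pt v \<in> PG5_points" unfolding PG5_points_def using assms(1,2) by auto
  then have "pt v \<in> P0 \<longleftrightarrow> W_line (pgline (proj_Pi2 v) (proj_Pi1 v))"
    using assms(3) transversal_eq[OF assms(1) x y] unfolding P0_def by simp
  also have "\<dots> \<longleftrightarrow> sform (proj_Pi2 v) (proj_Pi1 v) = 0"
    using isvec_proj[OF assms(1)] indep_proj[OF x y] by (rule W_line_pgline_iff)
  finally show ?thesis by (simp add: sform_proj)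
qed

lemma dot3_lc_left: "dot3 (lc s u t w) b = s * dot3 u b + t * dot3 w b"
  by (simp add: dot3_def lc_def sum.distrib sum_distrib_left algebra_simps)

lemma dot3_lc_right: "dot3 a (lc s u t w) = s * dot3 a u + t * dot3 a w"
  by (simp add: dot3_def lc_def sum.distrib sum_distrib_left algebra_simps)

lemma upper3_lc: "upper3 (lc s u t w) = lc s (upper3 u) t (upper3 w)"
  by (simp add: upper3_def lc_def fun_eq_iff)

lemma qform_lc:
  assumes "sform u w = 0"
  shows "qform (lc s u t w) = qform u * s\<^sup>2 + 2 * dot3 u (upper3 w) * s * t + qform w * t\<^sup>2"
proof -
  have "dot3 w (upper3 u) = dot3 u (upper3 w)" using assms sform_eq_dot3[of u w] by simp
  then show ?thesis
    by (simp add: qform_def upper3_lc dot3_lc_left dot3_lc_right power2_eq_square algebra_simps)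
qed

section \<open>A totally isotropic line disjoint from \<open>\<Pi>\<^sub>1 \<union> \<Pi>\<^sub>2\<close>\<close>

locale isotropic_line_off_planes =
  fixes u w :: "nat \<Rightarrow> 'a::{field,finite}"
  assumes isvec: "isvec u" "isvec w"
    and indep: "indep u w"
    and isotropic: "sform u w = 0"
    and off_planes: "pgline u w \<inter> (Pi1 \<union> Pi2) = {}"
begin

lemma pt_lc_in_P0_iff:
  assumes "(s, t) \<noteq> (0, 0)"
  shows "pt (lc s u t w) \<in> P0 \<longleftrightarrow> qform (lc s u t w) = 0"
  using pt_in_P0_iff isvec_lc[OF isvec] lc_nonzero[OF indep assms]
    off_planes pt_lc_in_pgline[OF assms]
  by blast

lemma line_inter_P0_param:
  assumes "X \<in> pgline u w \<inter> P0"
  obtains s t where "(s, t) \<noteq> (0, 0)" "X = pt (lc s u t w)" "qform (lc s u t w) = 0"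
  using assms pt_lc_in_P0_iff unfolding pgline_def by blast

lemma indep3_lower: "indep3 u w"
  unfolding indep3_def
proof (intro allI impI)
  fix s t :: 'a
  assume lower: "\<forall>i<3. s * u i + t * w i = 0"
  show "s = 0 \<and> t = 0"
  proof (rule ccontr)
    assume "\<not> (s = 0 \<and> t = 0)"
    then have st: "(s, t) \<noteq> (0, 0)" by simp
    then have "pt (lc s u t w) \<in> Pi1"
      using isvec_lc[OF isvec] lc_nonzero[OF indep] lower unfolding Pi1_def lc_def by blast
    then show False using off_planes pt_lc_in_pgline[OF st] by blast
  qed
qed

lemma indep3_upper: "indep3 (upper3 u) (upper3 w)"
  unfolding indep3_def
proof (intro allI impI)
  fix s t :: 'a
  assume upper: "\<forall>i<3. s * upper3 u i + t * upper3 w i = 0"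
  show "s = 0 \<and> t = 0"
  proof (rule ccontr)
    assume "\<not> (s = 0 \<and> t = 0)"
    then have st: "(s, t) \<noteq> (0, 0)" by simp
    have "lc s u t w i = 0" if "i \<ge> 3" for i
    proof (cases "i < 6")
      case True
      then show ?thesis using upper[rule_format, of "i - 3"] that by (simp add: upper3_def lc_def)
    next
      case False
      then show ?thesis using isvec_lc[OF isvec] unfolding isvec_def by simp
    qed
    then have "pt (lc s u t w) \<in> Pi2"
      using isvec_lc[OF isvec] lc_nonzero[OF indep st] unfolding Pi2_def by blast
    then show False using off_planes pt_lc_in_pgline[OF st] by blast
  qed
qed

lemma qform_coefficients_not_all_zero:
  "\<not> (qform u = 0 \<and> dot3 u (upper3 w) = 0 \<and> qform w = 0)"
proof
  assume zero: "qform u = 0 \<and> dot3 u (upper3 w) = 0 \<and> qform w = 0"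
  moreover have "dot3 w (upper3 u) = dot3 u (upper3 w)"
    using isotropic sform_eq_dot3[of u w] by simp
  ultimately show False
    using indep3_pairs_not_orthogonal[OF indep3_lower indep3_upper] unfolding qform_def by simp
qed

lemma card_line_inter_P0_char2:
  assumes two: "(1::'a) + 1 = 0"
  shows "card (pgline u w \<inter> P0) \<in> {1, card (UNIV :: 'a set) + 1}"
proof -
  define A C where "A = qform u" and "C = qform w"
  have "(2::'a) = 0" using two by simp
  then have Q: "qform (lc s u t w) = A * s\<^sup>2 + C * t\<^sup>2" for s t
    using qform_lc[OF isotropic, of s t] unfolding A_def C_def by simp
  show ?thesis
  proof (cases "A = 0 \<and> C = 0")
    case True
    have "pgline u w \<subseteq> P0"
    proof
      fix X
      assume "X \<in> pgline u w"
      then obtain s t where "(s, t) \<noteq> (0, 0)" "X = pt (lc s u t w)" unfolding pgline_def by blast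
      then show "X \<in> P0" using pt_lc_in_P0_iff Q True by simp
    qed
    then show ?thesis using card_pgline[OF indep] by (simp add: Int_absorb2)
  next
    case False
    then have AC: "A \<noteq> 0 \<or> C \<noteq> 0" by simp
    obtain s0 t0 where z: "(s0, t0) \<noteq> (0, 0)" "A * s0\<^sup>2 + C * t0\<^sup>2 = 0"
      using char2_binary_form_has_zero[OF two] .
    have "pgline u w \<inter> P0 = {pt (lc s0 u t0 w)}"
    proof
      show "pgline u w \<inter> P0 \<subseteq> {pt (lc s0 u t0 w)}"
      proof
        fix X
        assume "X \<in> pgline u w \<inter> P0"
        then obtain s t where st: "(s, t) \<noteq> (0, 0)" "X = pt (lc s u t w)" "qform (lc s u t w) = 0"
          by (rule line_inter_P0_param)
        then have "s * t0 = s0 * t"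
          using char2_binary_form_zeros_proportional[OF two AC _ z(2)] Q by simp
        then show "X \<in> {pt (lc s0 u t0 w)}" using pt_lc_eq_iff[OF indep st(1) z(1)] st(2) by simp
      qed
      show "{pt (lc s0 u t0 w)} \<subseteq> pgline u w \<inter> P0"
        using pt_lc_in_pgline[OF z(1)] pt_lc_in_P0_iff[OF z(1)] Q z(2) by simp
    qed
    then show ?thesis by simp
  qed
qed

lemma card_line_inter_P0_le_2:
  assumes two: "(1::'a) + 1 \<noteq> 0"
  shows "card (pgline u w \<inter> P0) \<le> 2"
proof (rule ccontr)
  assume "\<not> ?thesis"
  then have "3 \<le> card (pgline u w \<inter> P0)" by simp
  then obtain T where T: "T \<subseteq> pgline u w \<inter> P0" "card T = 3" by (rule obtain_subset_with_card_n)
  then obtain X Y Z where "T = {X, Y, Z}" and distinct: "X \<noteq> Y" "Y \<noteq> Z" "X \<noteq> Z"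
    unfolding card_3_iff by blast
  then have XYZ: "X \<in> pgline u w \<inter> P0" "Y \<in> pgline u w \<inter> P0" "Z \<in> pgline u w \<inter> P0"
    using T(1) by simp_all
  obtain s1 t1 where 1: "(s1, t1) \<noteq> (0, 0)" "X = pt (lc s1 u t1 w)" "qform (lc s1 u t1 w) = 0"
    using line_inter_P0_param[OF XYZ(1)] .
  obtain s2 t2 where 2: "(s2, t2) \<noteq> (0, 0)" "Y = pt (lc s2 u t2 w)" "qform (lc s2 u t2 w) = 0"
    using line_inter_P0_param[OF XYZ(2)] .
  obtain s3 t3 where 3: "(s3, t3) \<noteq> (0, 0)" "Z = pt (lc s3 u t3 w)" "qform (lc s3 u t3 w) = 0"
    using line_inter_P0_param[OF XYZ(3)] .
  have "qform u = 0 \<and> 2 * dot3 u (upper3 w) = 0 \<and> qform w = 0"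
  proof (rule binary_form_zero_if_three_zeros)
    show "qform u * s1\<^sup>2 + 2 * dot3 u (upper3 w) * s1 * t1 + qform w * t1\<^sup>2 = 0"
      "qform u * s2\<^sup>2 + 2 * dot3 u (upper3 w) * s2 * t2 + qform w * t2\<^sup>2 = 0"
      "qform u * s3\<^sup>2 + 2 * dot3 u (upper3 w) * s3 * t3 + qform w * t3\<^sup>2 = 0"
      using 1(3) 2(3) 3(3) unfolding qform_lc[OF isotropic] .
    show "s1 * t2 \<noteq> s2 * t1" using distinct(1) pt_lc_eq_iff[OF indep 1(1) 2(1)] 1(2) 2(2) by simp
    show "s1 * t3 \<noteq> s3 * t1" using distinct(3) pt_lc_eq_iff[OF indep 1(1) 3(1)] 1(2) 3(2) by simp
    show "s2 * t3 \<noteq> s3 * t2" using distinct(2) pt_lc_eq_iff[OF indep 2(1) 3(1)] 2(2) 3(2) by simp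
  qed
  moreover have "(2::'a) \<noteq> 0" using two by simp
  ultimately show False using qform_coefficients_not_all_zero by simp
qed

end

theorem mainTheorem12:
  fixes l :: "(nat \<Rightarrow> 'a::{field,finite}) set set"
  assumes "W_line l"
    and "l \<inter> (Pi1 \<union> Pi2) = {}"
  shows "(even (card (UNIV :: 'a set)) \<longrightarrow> card (l \<inter> P0) \<in> {1, card (UNIV :: 'a set) + 1})
       \<and> (odd (card (UNIV :: 'a set)) \<longrightarrow> card (l \<inter> P0) \<in> {0, 1, 2})"
proof -
  obtain u w :: "nat \<Rightarrow> 'a" where "isvec u" "isvec w" "indep u w" "sform u w = 0"
    and l: "l = pgline u w"
    using assms(1) unfolding W_line_def by blast
  then interpret isotropic_line_off_planes u w
    using assms(2) by unfold_locales simp_all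
  show ?thesis
  proof (intro conjI impI)
    assume "even (card (UNIV :: 'a set))"
    then show "card (l \<inter> P0) \<in> {1, card (UNIV :: 'a set) + 1}"
      using card_line_inter_P0_char2 even_card_UNIV_iff_char2 l by blast
  next
    assume "odd (card (UNIV :: 'a set))"
    then have "card (l \<inter> P0) \<le> 2"
      using card_line_inter_P0_le_2 even_card_UNIV_iff_char2 l by blast
    then show "card (l \<inter> P0) \<in> {0, 1, 2}" by auto
  qed
qed

end
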